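(* Let $\mathbf{V}\in\mathbb{R}^{L\times d}$, let $L=km$ and let $G_1,\dots,G_k$ be a partition of $\{1,\dots,L\}$ into groups of size $m$. Let $M\in\mathbb{R}^{k\times L}$ be given by $M_{g,i}=1/m$ if $i\in G_g$ and $M_{g,i}=0$ otherwise. Put $H=2\mathbf{V}^\top\mathbf{V}$ and $\bar H=2\mathbf{V}^\top M^\top M\mathbf{V}$. Then $\lambda_{\max}(\bar H)\le \lambda_{\max}(H)/m$.
   Context: $\lambda_{\max}$ denotes the largest eigenvalue of a symmetric matrix. *)

theory Defs
  imports "Jordan_Normal_Form.Char_Poly"
begin

definition lambda_max :: "real mat \<Rightarrow> real" where
  "lambda_max A = Max {a. eigenvalue A a}"

definition avg_mat :: "nat \<Rightarrow> nat \<Rightarrow> nat \<Rightarrow> (nat \<Rightarrow> nat set) \<Rightarrow> real mat" where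
  "avg_mat k L m G = mat k L (\<lambda>(g, i). if i \<in> G g then 1 / real m else 0)"

end

theory Submission
  imports Defs "Jordan_Normal_Form.Spectral_Radius" "HOL-Analysis.Function_Topology" "HOL-Analysis.Convex"
begin

(* For a Gram matrix, x . (2 B^T B) x = 2 |B x|^2, and by Cauchy-Schwarz on each group the
   averaging matrix shrinks squared norms by the factor m: m |M y|^2 <= |y|^2.  Taking y = V x,
   the Rayleigh quotient of 2 (M V)^T (M V) is pointwise at most 1/m times that of 2 V^T V.
   This passes to the largest eigenvalues because for a real symmetric matrix lambda_max is an
   eigenvalue and bounds the Rayleigh quotient; the latter is shown by maximising the quadratic
   form over the compact unit sphere and reading off the first-order condition at a maximiser. *)

unbundle no inner_syntax

(* Vectors of the variational argument are functions nat \<Rightarrow> real with the product topology,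
   in which the unit sphere becomes compact once it is cut down to the cube [-1, 1]^UNIV. *)
definition bilinear_form :: "nat \<Rightarrow> (nat \<Rightarrow> nat \<Rightarrow> real) \<Rightarrow> (nat \<Rightarrow> real) \<Rightarrow> (nat \<Rightarrow> real) \<Rightarrow> real"
  where "bilinear_form d a f g = (\<Sum>i<d. \<Sum>j<d. a i j * f i * g j)"

lemma bilinear_form_scale:
  "bilinear_form d a (\<lambda>i. c * f i) (\<lambda>i. c' * g i) = c * c' * bilinear_form d a f g"
  unfolding bilinear_form_def by (simp add: sum_distrib_left algebra_simps)

lemma compact_unit_sphere_in_cube:
  "compact (Pi UNIV (\<lambda>_. {-1..1::real}) \<inter> {f::nat \<Rightarrow> real. (\<Sum>i<d. (f i)\<^sup>2) = 1})"
proof (rule compact_Int_closed)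
  have "compactin (product_topology (\<lambda>_. euclidean) UNIV) (PiE UNIV (\<lambda>_. {-1..1::real}))"
    by (simp add: compactin_PiE)
  then show "compact (Pi UNIV (\<lambda>_. {-1..1::real}))"
    by (simp add: euclidean_product_topology PiE_UNIV_domain)
  show "closed {f::nat\<Rightarrow>real. (\<Sum>i<d. (f i)\<^sup>2) = 1}"
    by (intro closed_Collect_eq continuous_intros continuous_on_product_coordinates)
qed

lemma bilinear_form_attains_max_on_unit_sphere:
  assumes "d > 0"
  obtains u where "(\<Sum>i<d. (u i)\<^sup>2) = 1"
    and "\<And>x. (\<Sum>i<d. (x i)\<^sup>2) = 1 \<Longrightarrow> bilinear_form d a x x \<le> bilinear_form d a u u"
proof -
  let ?K = "Pi UNIV (\<lambda>_. {-1..1::real}) \<inter> {f::nat \<Rightarrow> real. (\<Sum>i<d. (f i)\<^sup>2) = 1}"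
  have "(\<lambda>i. if i = 0 then 1 else 0) \<in> ?K"
    using assms by (simp add: power2_eq_square if_distrib[of "\<lambda>x. x * _"] cong: if_cong)
  then have "?K \<noteq> {}" by blast
  moreover have "continuous_on ?K (\<lambda>f. bilinear_form d a f f)"
    unfolding bilinear_form_def
    by (intro continuous_intros continuous_on_product_then_coordinatewise continuous_on_id)
  ultimately have "\<exists>u\<in>?K. \<forall>y\<in>?K. bilinear_form d a y y \<le> bilinear_form d a u u"
    by (rule continuous_attains_sup[OF compact_unit_sphere_in_cube])
  then obtain u where u: "u \<in> ?K" and max: "\<And>y. y \<in> ?K \<Longrightarrow> bilinear_form d a y y \<le> bilinear_form d a u u"
    by blast
  show ?thesis
  proof
    show "(\<Sum>i<d. (u i)\<^sup>2) = 1" using u by auto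
    fix x :: "nat \<Rightarrow> real" assume x: "(\<Sum>i<d. (x i)\<^sup>2) = 1"
    define x' where "x' i = (if i < d then x i else 0)" for i
    have "(x i)\<^sup>2 \<le> 1" if "i < d" for i
      using member_le_sum[of i "{..<d}" "\<lambda>i. (x i)\<^sup>2"] that x by simp
    then have "\<bar>x i\<bar> \<le> 1" if "i < d" for i using that abs_square_le_1 by blast
    then have "x' \<in> ?K" using x unfolding x'_def by (auto simp: abs_le_iff)
    moreover have "bilinear_form d a x x = bilinear_form d a x' x'"
      unfolding bilinear_form_def x'_def by simp
    ultimately show "bilinear_form d a x x \<le> bilinear_form d a u u" using max by simp
  qed
qed

lemma bilinear_form_le_max_on_unit_sphere_times_sq_norm:
  assumes u: "(\<Sum>i<d. (u i)\<^sup>2) = 1"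
    and max: "\<And>x. (\<Sum>i<d. (x i)\<^sup>2) = 1 \<Longrightarrow> bilinear_form d a x x \<le> bilinear_form d a u u"
  shows "bilinear_form d a x x \<le> bilinear_form d a u u * (\<Sum>i<d. (x i)\<^sup>2)"
proof (cases "\<forall>i<d. x i = 0")
  case True
  then show ?thesis unfolding bilinear_form_def by simp
next
  case False
  then obtain i where "i < d" "x i \<noteq> 0" by blast
  define s where "s = sqrt (\<Sum>i<d. (x i)\<^sup>2)"
  have pos: "(\<Sum>i<d. (x i)\<^sup>2) > 0" using \<open>i < d\<close> \<open>x i \<noteq> 0\<close> by (intro sum_pos2[of "{..<d}" i]) auto
  then have s: "s > 0" "s\<^sup>2 = (\<Sum>i<d. (x i)\<^sup>2)" unfolding s_def by simp_all
  have "(\<Sum>i<d. (x i / s)\<^sup>2) = 1"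
    using s pos by (simp add: power_divide flip: sum_divide_distrib)
  then have max_s: "bilinear_form d a (\<lambda>i. x i / s) (\<lambda>i. x i / s) \<le> bilinear_form d a u u"
    by (rule max)
  have "bilinear_form d a x x = s\<^sup>2 * bilinear_form d a (\<lambda>i. x i / s) (\<lambda>i. x i / s)"
    using bilinear_form_scale[of d a s "\<lambda>i. x i / s" s "\<lambda>i. x i / s"] s by (simp add: power2_eq_square)
  also have "\<dots> \<le> s\<^sup>2 * bilinear_form d a u u"
    using max_s by (rule mult_left_mono) simp
  also have "\<dots> = bilinear_form d a u u * (\<Sum>i<d. (x i)\<^sup>2)"
    using s(2) by (simp only: mult.commute)
  finally show ?thesis .
qed

lemma linear_coeff_eq_0_if_quadratic_nonneg:
  fixes a b :: real
  assumes "\<And>t. 0 \<le> t * a + t\<^sup>2 * b"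
  shows "a = 0"
proof (rule ccontr)
  assume "a \<noteq> 0"
  define c where "c = \<bar>b\<bar> + 1"
  have c: "c > 0" "\<bar>b\<bar> < c" unfolding c_def by simp_all
  define t where "t = - a / c"
  have "t\<^sup>2 * b \<le> t\<^sup>2 * \<bar>b\<bar>" by (simp add: mult_left_mono)
  also have "\<dots> < t\<^sup>2 * c"
    using \<open>a \<noteq> 0\<close> c unfolding t_def by (intro mult_strict_left_mono) simp_all
  also have "\<dots> = - (t * a)"
    using c unfolding t_def by (simp add: power2_eq_square)
  finally show False using assms[of t] by simp
qed

(* Perturbing the null vector u in the direction w = A u gives 0 <= 2 t |A u|^2 + O(t^2)
   for all t, which forces A u = 0. *)
lemma psd_bilinear_form_null_vector:
  fixes a :: "nat \<Rightarrow> nat \<Rightarrow> real"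
  assumes sym: "\<And>i j. i < d \<Longrightarrow> j < d \<Longrightarrow> a i j = a j i"
    and psd: "\<And>x. 0 \<le> bilinear_form d a x x"
    and null: "bilinear_form d a u u = 0"
    and i: "i < d"
  shows "(\<Sum>j<d. a i j * u j) = 0"
proof -
  define w where "w i = (\<Sum>j<d. a i j * u j)" for i
  have "(\<Sum>i<d. \<Sum>j<d. a i j * u i * w j) = (\<Sum>j<d. w j * (\<Sum>i<d. a j i * u i))"
    by (subst sum.swap) (auto simp: sum_distrib_left mult_ac sym intro!: sum.cong)
  then have uw: "(\<Sum>i<d. \<Sum>j<d. a i j * u i * w j) = (\<Sum>i<d. (w i)\<^sup>2)"
    by (simp add: w_def power2_eq_square)
  have "(\<Sum>i<d. \<Sum>j<d. a i j * w i * u j) = (\<Sum>i<d. w i * (\<Sum>j<d. a i j * u j))"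
    by (simp add: sum_distrib_left mult_ac)
  then have wu: "(\<Sum>i<d. \<Sum>j<d. a i j * w i * u j) = (\<Sum>i<d. (w i)\<^sup>2)"
    by (simp add: w_def power2_eq_square)
  have "bilinear_form d a (\<lambda>i. u i + t * w i) (\<lambda>i. u i + t * w i)
      = bilinear_form d a u u + t * (\<Sum>i<d. \<Sum>j<d. a i j * u i * w j)
        + t * (\<Sum>i<d. \<Sum>j<d. a i j * w i * u j) + t\<^sup>2 * bilinear_form d a w w" for t
    unfolding bilinear_form_def
    by (simp add: algebra_simps sum.distrib power2_eq_square sum_distrib_left)
  then have "0 \<le> t * (2 * (\<Sum>i<d. (w i)\<^sup>2)) + t\<^sup>2 * bilinear_form d a w w" for t
    using psd[of "\<lambda>i. u i + t * w i"] null uw wu by simp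
  then have "(\<Sum>i<d. (w i)\<^sup>2) = 0"
    using linear_coeff_eq_0_if_quadratic_nonneg by (metis mult_eq_0_iff zero_neq_numeral)
  then show ?thesis using i by (simp add: sum_nonneg_eq_0_iff w_def)
qed

lemma symmetric_bilinear_form_max_eigenvector:
  assumes "d > 0" and sym: "\<And>i j. i < d \<Longrightarrow> j < d \<Longrightarrow> a i j = a j i"
  obtains u \<mu> where "(\<Sum>i<d. (u i)\<^sup>2) = 1"
    and "\<And>i. i < d \<Longrightarrow> (\<Sum>j<d. a i j * u j) = \<mu> * u i"
    and "\<And>x. bilinear_form d a x x \<le> \<mu> * (\<Sum>i<d. (x i)\<^sup>2)"
proof -
  obtain u where u: "(\<Sum>i<d. (u i)\<^sup>2) = 1"
    and max: "\<And>x. (\<Sum>i<d. (x i)\<^sup>2) = 1 \<Longrightarrow> bilinear_form d a x x \<le> bilinear_form d a u u"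
    using bilinear_form_attains_max_on_unit_sphere[OF \<open>d > 0\<close>] by blast
  define \<mu> where "\<mu> = bilinear_form d a u u"
  have ray: "bilinear_form d a x x \<le> \<mu> * (\<Sum>i<d. (x i)\<^sup>2)" for x
    unfolding \<mu>_def using bilinear_form_le_max_on_unit_sphere_times_sq_norm[OF u max] .
  define b where "b i j = of_bool (i = j) * \<mu> - a i j" for i j
  have b_form: "bilinear_form d b x x = \<mu> * (\<Sum>i<d. (x i)\<^sup>2) - bilinear_form d a x x" for x
    unfolding bilinear_form_def b_def
    by (simp add: left_diff_distrib sum_subtractf power2_eq_square sum_distrib_left mult.assoc)
  have "(\<Sum>j<d. b i j * u j) = 0" if "i < d" for i
  proof (rule psd_bilinear_form_null_vector[OF _ _ _ that])
    show "b i j = b j i" if "i < d" "j < d" for i j using sym that unfolding b_def by auto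
    show "0 \<le> bilinear_form d b x x" for x using ray b_form by simp
    show "bilinear_form d b u u = 0" using b_form u \<mu>_def by simp
  qed
  then have "(\<Sum>j<d. a i j * u j) = \<mu> * u i" if "i < d" for i
    using that unfolding b_def by (simp add: left_diff_distrib sum_subtractf mult.assoc)
  with u ray show ?thesis using that by blast
qed

lemma scalar_prod_self_eq_sum_squares:
  fixes x :: "real vec"
  assumes "x \<in> carrier_vec d"
  shows "x \<bullet> x = (\<Sum>i<d. (x $ i)\<^sup>2)"
  using assms unfolding scalar_prod_def power2_eq_square by (simp add: atLeast0LessThan)

lemma scalar_prod_self_pos:
  fixes x :: "real vec"
  assumes "x \<in> carrier_vec d" and "x \<noteq> 0\<^sub>v d"
  shows "x \<bullet> x > 0"
  using conjugate_square_greater_0_vec[OF assms(1)] assms(2) by simp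

lemma scalar_prod_mult_mat_vec_eq_bilinear_form:
  assumes "A \<in> carrier_mat d d" and "x \<in> carrier_vec d"
  shows "x \<bullet> (A *\<^sub>v x) = bilinear_form d (\<lambda>i j. A $$ (i, j)) (\<lambda>i. x $ i) (\<lambda>i. x $ i)"
  using assms unfolding bilinear_form_def scalar_prod_def mult_mat_vec_def row_def
  by (simp add: sum_distrib_left atLeast0LessThan algebra_simps)

lemma eigenvalue_le_of_rayleigh_bound:
  fixes A :: "real mat"
  assumes A: "A \<in> carrier_mat d d"
    and bound: "\<And>x. x \<in> carrier_vec d \<Longrightarrow> x \<bullet> (A *\<^sub>v x) \<le> \<mu> * (x \<bullet> x)"
    and "eigenvalue A l"
  shows "l \<le> \<mu>"
proof -
  obtain w where "eigenvector A w l" using \<open>eigenvalue A l\<close> unfolding eigenvalue_def by blast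
  then have w: "w \<in> carrier_vec d" "w \<noteq> 0\<^sub>v d" and "A *\<^sub>v w = l \<cdot>\<^sub>v w"
    using A unfolding eigenvector_def by auto
  then have "l * (w \<bullet> w) \<le> \<mu> * (w \<bullet> w)" using bound[OF w(1)] by simp
  then show ?thesis using scalar_prod_self_pos[OF w] by simp
qed

lemma lambda_max_eqI:
  fixes A :: "real mat"
  assumes "A \<in> carrier_mat d d" and "eigenvalue A \<mu>" and "\<And>l. eigenvalue A l \<Longrightarrow> l \<le> \<mu>"
  shows "lambda_max A = \<mu>"
  unfolding lambda_max_def
  using card_finite_spectrum(1)[OF assms(1)] assms(2,3) by (intro Max_eqI) (auto simp: spectrum_def)

lemma lambda_max_of_symmetric:
  fixes A :: "real mat"
  assumes A: "A \<in> carrier_mat d d" and "d > 0" and sym: "transpose_mat A = A"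
  shows "eigenvalue A (lambda_max A)"
    and "\<And>x. x \<in> carrier_vec d \<Longrightarrow> x \<bullet> (A *\<^sub>v x) \<le> lambda_max A * (x \<bullet> x)"
proof -
  have sym_entries: "A $$ (i, j) = A $$ (j, i)" if "i < d" "j < d" for i j
    using A that arg_cong[OF sym, of "\<lambda>B. B $$ (j, i)"] by simp
  obtain u \<mu> where u: "(\<Sum>i<d. (u i)\<^sup>2) = 1"
    and eigen: "\<And>i. i < d \<Longrightarrow> (\<Sum>j<d. A $$ (i, j) * u j) = \<mu> * u i"
    and ray: "\<And>x. bilinear_form d (\<lambda>i j. A $$ (i, j)) x x \<le> \<mu> * (\<Sum>i<d. (x i)\<^sup>2)"
    using symmetric_bilinear_form_max_eigenvector[where a = "\<lambda>i j. A $$ (i, j)", OF \<open>d > 0\<close> sym_entries]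
    by blast
  have bound: "x \<bullet> (A *\<^sub>v x) \<le> \<mu> * (x \<bullet> x)" if "x \<in> carrier_vec d" for x
    using ray scalar_prod_mult_mat_vec_eq_bilinear_form[OF A that]
      scalar_prod_self_eq_sum_squares[OF that] by simp
  define v where "v = vec d u"
  have v: "v \<in> carrier_vec d" unfolding v_def by simp
  have "A *\<^sub>v v = \<mu> \<cdot>\<^sub>v v"
    using A eigen unfolding v_def mult_mat_vec_def scalar_prod_def row_def
    by (intro eq_vecI) (auto simp: atLeast0LessThan)
  moreover have "v \<bullet> v = 1"
    using u scalar_prod_self_eq_sum_squares[OF v] unfolding v_def by simp
  then have "v \<noteq> 0\<^sub>v d" by (metis scalar_prod_left_zero v zero_neq_one)
  ultimately have "eigenvector A v \<mu>"
    using A v unfolding eigenvector_def by simp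
  then have "eigenvalue A \<mu>" unfolding eigenvalue_def by blast
  moreover have "lambda_max A = \<mu>"
    using eigenvalue_le_of_rayleigh_bound[OF A bound] lambda_max_eqI[OF A] \<open>eigenvalue A \<mu>\<close> by blast
  ultimately show "eigenvalue A (lambda_max A)"
    and "\<And>x. x \<in> carrier_vec d \<Longrightarrow> x \<bullet> (A *\<^sub>v x) \<le> lambda_max A * (x \<bullet> x)"
    using bound by simp_all
qed

lemma gram_mat_symmetric:
  fixes B :: "real mat"
  assumes "B \<in> carrier_mat n d"
  shows "transpose_mat (c \<cdot>\<^sub>m (transpose_mat B * B)) = c \<cdot>\<^sub>m (transpose_mat B * B)"
  using assms by (intro eq_matI) (auto simp: comm_scalar_prod[of _ n])

lemma gram_quadratic_form:
  fixes B :: "real mat"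
  assumes B: "B \<in> carrier_mat n d" and x: "x \<in> carrier_vec d"
  shows "x \<bullet> ((c \<cdot>\<^sub>m (transpose_mat B * B)) *\<^sub>v x) = c * ((B *\<^sub>v x) \<bullet> (B *\<^sub>v x))"
proof -
  have "(c \<cdot>\<^sub>m (transpose_mat B * B)) *\<^sub>v x = c \<cdot>\<^sub>v ((transpose_mat B * B) *\<^sub>v x)"
    using B x by (intro eq_vecI) (auto simp: mult_mat_vec_def)
  also have "\<dots> = c \<cdot>\<^sub>v (transpose_mat B *\<^sub>v (B *\<^sub>v x))"
    using B x by simp
  finally have "(c \<cdot>\<^sub>m (transpose_mat B * B)) *\<^sub>v x = c \<cdot>\<^sub>v (transpose_mat B *\<^sub>v (B *\<^sub>v x))" .
  moreover have "x \<bullet> (transpose_mat B *\<^sub>v (B *\<^sub>v x)) = (B *\<^sub>v x) \<bullet> (B *\<^sub>v x)"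
    using B x comm_scalar_prod[of x d] transpose_vec_mult_scalar[OF B x, of "B *\<^sub>v x"] by simp
  ultimately show ?thesis using B x by simp
qed

lemma lambda_max_gram_mono:
  fixes B C :: "real mat"
  assumes B: "B \<in> carrier_mat n d" and C: "C \<in> carrier_mat p d" and "d > 0"
    and "c \<ge> 0" and "r \<ge> 0"
    and le: "\<And>x. x \<in> carrier_vec d \<Longrightarrow> (C *\<^sub>v x) \<bullet> (C *\<^sub>v x) \<le> r * ((B *\<^sub>v x) \<bullet> (B *\<^sub>v x))"
  shows "lambda_max (c \<cdot>\<^sub>m (transpose_mat C * C)) \<le> r * lambda_max (c \<cdot>\<^sub>m (transpose_mat B * B))"
proof (rule eigenvalue_le_of_rayleigh_bound)
  let ?HB = "c \<cdot>\<^sub>m (transpose_mat B * B)" and ?HC = "c \<cdot>\<^sub>m (transpose_mat C * C)"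
  have HB: "?HB \<in> carrier_mat d d" using B by simp
  show HC: "?HC \<in> carrier_mat d d" using C by simp
  show "eigenvalue ?HC (lambda_max ?HC)"
    by (rule lambda_max_of_symmetric(1)[OF HC \<open>d > 0\<close> gram_mat_symmetric[OF C]])
  fix x :: "real vec" assume x: "x \<in> carrier_vec d"
  have "x \<bullet> (?HC *\<^sub>v x) = c * ((C *\<^sub>v x) \<bullet> (C *\<^sub>v x))" by (rule gram_quadratic_form[OF C x])
  also have "\<dots> \<le> c * (r * ((B *\<^sub>v x) \<bullet> (B *\<^sub>v x)))" using le[OF x] \<open>c \<ge> 0\<close> by (rule mult_left_mono)
  also have "\<dots> = r * (x \<bullet> (?HB *\<^sub>v x))" using gram_quadratic_form[OF B x] by simp
  also have "\<dots> \<le> r * (lambda_max ?HB * (x \<bullet> x))"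
    using lambda_max_of_symmetric(2)[OF HB \<open>d > 0\<close> gram_mat_symmetric[OF B] x] \<open>r \<ge> 0\<close>
    by (rule mult_left_mono)
  finally show "x \<bullet> (?HC *\<^sub>v x) \<le> r * lambda_max ?HB * (x \<bullet> x)" by (simp only: mult.assoc)
qed

lemma avg_mat_mult_vec_sq_norm_le:
  fixes y :: "real vec"
  assumes L: "L = k * m"
    and part_cover: "(\<Union>g<k. G g) = {0..<L}"
    and part_disj: "\<And>g h. g < k \<Longrightarrow> h < k \<Longrightarrow> g \<noteq> h \<Longrightarrow> G g \<inter> G h = {}"
    and part_size: "\<And>g. g < k \<Longrightarrow> card (G g) = m"
    and y: "y \<in> carrier_vec L"
  shows "(avg_mat k L m G *\<^sub>v y) \<bullet> (avg_mat k L m G *\<^sub>v y) \<le> (y \<bullet> y) / real m"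
proof (cases "m = 0")
  case True
  then have "L = 0" using L by simp
  then have "avg_mat k L m G *\<^sub>v y = 0\<^sub>v k"
    using y by (intro eq_vecI) (simp_all add: avg_mat_def mult_mat_vec_def scalar_prod_def)
  then show ?thesis using True by simp
next
  case False
  let ?M = "avg_mat k L m G"
  define S where "S g = (\<Sum>i\<in>G g. y $ i)" for g
  have sub: "G g \<subseteq> {0..<L}" if "g < k" for g using part_cover that by blast
  then have fin: "finite (G g)" if "g < k" for g using that finite_subset by blast
  have My: "?M *\<^sub>v y \<in> carrier_vec k" unfolding avg_mat_def by (simp add: mult_mat_vec_def)
  have My_nth: "(?M *\<^sub>v y) $ g = S g / m" if g: "g < k" for g
  proof -
    have "(?M *\<^sub>v y) $ g = (\<Sum>i\<in>{0..<L}. if i \<in> G g then y $ i / m else 0)"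
      using g y unfolding avg_mat_def mult_mat_vec_def scalar_prod_def by (auto intro: sum.cong)
    also have "\<dots> = S g / m"
      using sub[OF g] by (simp add: S_def sum.If_cases Int_absorb1 sum_divide_distrib)
    finally show ?thesis .
  qed
  have "(?M *\<^sub>v y) \<bullet> (?M *\<^sub>v y) = (\<Sum>g<k. (S g)\<^sup>2 / m) / m"
    using scalar_prod_self_eq_sum_squares[OF My] My_nth
    by (simp add: power_divide power2_eq_square sum_divide_distrib)
  also have "\<dots> \<le> (\<Sum>g<k. (\<Sum>i\<in>G g. (y $ i)\<^sup>2) * card (G g) / m) / m"
    unfolding S_def
    by (intro divide_right_mono sum_mono sum_squared_le_sum_of_squares) auto
  also have "\<dots> = (\<Sum>g<k. \<Sum>i\<in>G g. (y $ i)\<^sup>2) / m"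
    using False part_size by simp
  also have "(\<Sum>g<k. \<Sum>i\<in>G g. (y $ i)\<^sup>2) = (\<Sum>i\<in>(\<Union>g<k. G g). (y $ i)\<^sup>2)"
    using fin part_disj by (intro sum.UNION_disjoint[symmetric]) auto
  also have "\<dots> = y \<bullet> y"
    unfolding part_cover scalar_prod_self_eq_sum_squares[OF y] by (simp add: atLeast0LessThan)
  finally show ?thesis .
qed

theorem mainTheorem6:
  fixes V :: "real mat" and L d k m :: nat and G :: "nat \<Rightarrow> nat set"
  assumes V: "V \<in> carrier_mat L d"
    and d: "d > 0"
    and L: "L = k * m"
    and part_cover: "(\<Union>g<k. G g) = {0..<L}"
    and part_disj: "\<And>g h. g < k \<Longrightarrow> h < k \<Longrightarrow> g \<noteq> h \<Longrightarrow> G g \<inter> G h = {}"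
    and part_size: "\<And>g. g < k \<Longrightarrow> card (G g) = m"
  shows "lambda_max (2 \<cdot>\<^sub>m (transpose_mat V * transpose_mat (avg_mat k L m G) * avg_mat k L m G * V))
           \<le> lambda_max (2 \<cdot>\<^sub>m (transpose_mat V * V)) / real m"
proof -
  let ?M = "avg_mat k L m G"
  have M: "?M \<in> carrier_mat k L" unfolding avg_mat_def by simp
  have "transpose_mat V * transpose_mat ?M * ?M * V = (transpose_mat V * transpose_mat ?M) * (?M * V)"
    using M V by (intro assoc_mult_mat[of _ d k _ L _ d]) auto
  then have gram: "transpose_mat V * transpose_mat ?M * ?M * V = transpose_mat (?M * V) * (?M * V)"
    by (simp only: transpose_mult[OF M V])
  have "lambda_max (2 \<cdot>\<^sub>m (transpose_mat (?M * V) * (?M * V)))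
      \<le> 1 / real m * lambda_max (2 \<cdot>\<^sub>m (transpose_mat V * V))"
  proof (rule lambda_max_gram_mono[OF V _ d])
    show "?M * V \<in> carrier_mat k d" using M V by simp
    fix x :: "real vec" assume x: "x \<in> carrier_vec d"
    have "((?M * V) *\<^sub>v x) \<bullet> ((?M * V) *\<^sub>v x) \<le> ((V *\<^sub>v x) \<bullet> (V *\<^sub>v x)) / real m"
      using avg_mat_mult_vec_sq_norm_le[OF L part_cover part_disj part_size, of "V *\<^sub>v x"] M V x
      by simp
    then show "((?M * V) *\<^sub>v x) \<bullet> ((?M * V) *\<^sub>v x) \<le> 1 / real m * ((V *\<^sub>v x) \<bullet> (V *\<^sub>v x))"
      by simp
  qed simp_all
  then show ?thesis unfolding gram by (simp only: times_divide_eq_left mult_1)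
qed

end
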